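(* Let $H=(V,f)$ be a separated labeled hypergraph with connected 1-skeleton. Suppose $H$ is 2-solvable (modulo some prime $p$), and that, for the corresponding red/blue 2-coloring, $H$ has a simple edge containing a different number of red vertices than blue vertices. Then $\mathcal A[H]\neq k[H]$.
   Context: Let $k$ be a field and $S=k[x_1,\dots,x_n,y]$. For an integral convex polytope $\mathcal P\subseteq\mathbb R^n_{\ge 0}$, the Ehrhart ring $\mathcal A[\mathcal P]$ is the $k$-subspace of $S$ spanned by the monomials $x^{\mathbf a}y^t$ with $t\in\mathbb N$, $\mathbf a\in t\mathcal P\cap\mathbb Z^n$; the polytopal ring is $k[\mathcal P]=k[x^{\mathbf a}y:\mathbf a\in\mathcal P\cap\mathbb Z^n]$. A labeled hypergraph $H=(V,f)$ on a finite set $V$ with alphabet $\{x_1,\dots,x_n\}$ is a function $f:\{x_1,\dots,x_n\}\to\mathcal P(V)$; its edges are the nonempty sets in the image of $f$. $H$ is separated if for all distinct $v,w\in V$ there are edges $F,G$ with $v\in F\setminus G$, $w\in G\setminus F$. For separated $H$, let $x^{\mathbf a_v}=\prod_{x:\,v\in f(x)}x$ for $v\in V$, $\mathcal P_H=\mathrm{conv}\{\mathbf a_v:v\in V\}$, $\mathcal A[H]=\mathcal A[\mathcal P_H]$, $k[H]=k[\mathcal P_H]$. An edge is simple if no other edge of $H$ is a proper subset of it. The 1-skeleton of $H$ is the simple graph on $V$ whose edges are the edges of $H$ with exactly two vertices. For a prime $p$, $H$ is 2-solvable modulo $p$ if there is a proper 2-coloring of the 1-skeleton of $H$ by colors red and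 blue (adjacent vertices get different colors, every vertex of $V$ colored) such that for every edge $E$ of $H$, and also for $E=V$, the numbers $r_E$ and $b_E$ of red and blue vertices in $E$ satisfy $r_E-b_E\equiv 0\pmod p$. $H$ is 2-solvable if it is 2-solvable modulo some prime $p$. *)

theory Defs
  imports "HOL-Analysis.Analysis" "HOL-Library.Poly_Mapping"
begin

(* Polynomial ring S = k[x_1..x_n, y]: the variables are indexed by 'x option,
   Some i = x_i (i ranges over the finite alphabet type 'x), None = y. *)

type_synonym ('x,'k) spoly = "('x option \<Rightarrow>\<^sub>0 nat) \<Rightarrow>\<^sub>0 'k"

definition expo :: "('x::finite \<Rightarrow> nat) \<Rightarrow> nat \<Rightarrow> ('x option \<Rightarrow>\<^sub>0 nat)" where
  "expo a t = Abs_poly_mapping (\<lambda>j. case j of None \<Rightarrow> t | Some i \<Rightarrow> a i)"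

definition monomial :: "('x::finite \<Rightarrow> nat) \<Rightarrow> nat \<Rightarrow> ('x,'k::field) spoly" where
  "monomial a t = Poly_Mapping.single (expo a t) 1"

inductive_set kspan :: "('m::comm_monoid_add \<Rightarrow>\<^sub>0 'k::field) set \<Rightarrow> ('m \<Rightarrow>\<^sub>0 'k) set"
  for G where
  kspan_zero: "0 \<in> kspan G"
| kspan_gen: "g \<in> G \<Longrightarrow> g \<in> kspan G"
| kspan_add: "p \<in> kspan G \<Longrightarrow> q \<in> kspan G \<Longrightarrow> p + q \<in> kspan G"
| kspan_smult: "p \<in> kspan G \<Longrightarrow> Poly_Mapping.single 0 c * p \<in> kspan G"

inductive_set kalg :: "('m::comm_monoid_add \<Rightarrow>\<^sub>0 'k::field) set \<Rightarrow> ('m \<Rightarrow>\<^sub>0 'k) set"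
  for G where
  kalg_one: "1 \<in> kalg G"
| kalg_gen: "g \<in> G \<Longrightarrow> g \<in> kalg G"
| kalg_add: "p \<in> kalg G \<Longrightarrow> q \<in> kalg G \<Longrightarrow> p + q \<in> kalg G"
| kalg_mult: "p \<in> kalg G \<Longrightarrow> q \<in> kalg G \<Longrightarrow> p * q \<in> kalg G"
| kalg_smult: "p \<in> kalg G \<Longrightarrow> Poly_Mapping.single 0 c * p \<in> kalg G"

definition rvec :: "('x::finite \<Rightarrow> nat) \<Rightarrow> real^'x" where
  "rvec a = (\<chi> i. real (a i))"

definition ehrhart_ring :: "(real^'x::finite) set \<Rightarrow> ('x,'k::field) spoly set" where
  "ehrhart_ring P = kspan {monomial a t | a t. rvec a \<in> (\<lambda>p. real t *\<^sub>R p) ` P}"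

definition polytopal_ring :: "(real^'x::finite) set \<Rightarrow> ('x,'k::field) spoly set" where
  "polytopal_ring P = kalg {monomial a 1 | a. rvec a \<in> P}"

definition labeled_hypergraph :: "'v set \<Rightarrow> ('x \<Rightarrow> 'v set) \<Rightarrow> bool" where
  "labeled_hypergraph V f \<longleftrightarrow> finite V \<and> (\<forall>x. f x \<subseteq> V)"

definition hedges :: "('x \<Rightarrow> 'v set) \<Rightarrow> 'v set set" where
  "hedges f = {E. E \<in> range f \<and> E \<noteq> {}}"

definition separated :: "'v set \<Rightarrow> ('x \<Rightarrow> 'v set) \<Rightarrow> bool" where
  "separated V f \<longleftrightarrow> (\<forall>v\<in>V. \<forall>w\<in>V. v \<noteq> w \<longrightarrow>
     (\<exists>F\<in>hedges f. \<exists>G\<in>hedges f. v \<in> F - G \<and> w \<in> G - F))"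

definition simple_edge :: "('x \<Rightarrow> 'v set) \<Rightarrow> 'v set \<Rightarrow> bool" where
  "simple_edge f E \<longleftrightarrow> E \<in> hedges f \<and> \<not> (\<exists>G\<in>hedges f. G \<subset> E)"

definition skel_adj :: "('x \<Rightarrow> 'v set) \<Rightarrow> 'v \<Rightarrow> 'v \<Rightarrow> bool" where
  "skel_adj f u w \<longleftrightarrow> {u, w} \<in> hedges f \<and> u \<noteq> w"

definition skel_connected :: "'v set \<Rightarrow> ('x \<Rightarrow> 'v set) \<Rightarrow> bool" where
  "skel_connected V f \<longleftrightarrow>
     (\<forall>u\<in>V. \<forall>w\<in>V. (u, w) \<in> {(a, b). skel_adj f a b}\<^sup>*)"

definition num_red :: "('v \<Rightarrow> bool) \<Rightarrow> 'v set \<Rightarrow> int" where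
  "num_red red E = int (card {v\<in>E. red v})"

definition num_blue :: "('v \<Rightarrow> bool) \<Rightarrow> 'v set \<Rightarrow> int" where
  "num_blue red E = int (card {v\<in>E. \<not> red v})"

definition two_solving_coloring :: "'v set \<Rightarrow> ('x \<Rightarrow> 'v set) \<Rightarrow> nat \<Rightarrow> ('v \<Rightarrow> bool) \<Rightarrow> bool" where
  "two_solving_coloring V f p red \<longleftrightarrow>
     (\<forall>u w. skel_adj f u w \<longrightarrow> red u \<noteq> red w) \<and>
     (\<forall>E \<in> insert V (hedges f). (num_red red E - num_blue red E) mod int p = 0)"

definition two_solvable_mod :: "'v set \<Rightarrow> ('x \<Rightarrow> 'v set) \<Rightarrow> nat \<Rightarrow> bool" where
  "two_solvable_mod V f p \<longleftrightarrow> (\<exists>red. two_solving_coloring V f p red)"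

definition two_solvable :: "'v set \<Rightarrow> ('x \<Rightarrow> 'v set) \<Rightarrow> bool" where
  "two_solvable V f \<longleftrightarrow> (\<exists>p. prime p \<and> two_solvable_mod V f p)"

definition avec :: "('x::finite \<Rightarrow> 'v set) \<Rightarrow> 'v \<Rightarrow> real^'x" where
  "avec f v = (\<chi> i. if v \<in> f i then 1 else 0)"

definition polytope_H :: "'v set \<Rightarrow> ('x::finite \<Rightarrow> 'v set) \<Rightarrow> (real^'x) set" where
  "polytope_H V f = convex hull (avec f ` V)"

definition ehrhart_H :: "'v set \<Rightarrow> ('x::finite \<Rightarrow> 'v set) \<Rightarrow> ('x,'k::field) spoly set" where
  "ehrhart_H V f = ehrhart_ring (polytope_H V f)"

definition polytopal_H :: "'v set \<Rightarrow> ('x::finite \<Rightarrow> 'v set) \<Rightarrow> ('x,'k::field) spoly set" where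
  "polytopal_H V f = polytopal_ring (polytope_H V f)"

end

theory Submission
  imports Defs
begin

text \<open>
  Give each vertex the weight \<open>\<mu>(v) = 1 + \<epsilon>(v)/p\<close>, where \<open>\<epsilon>(v) = 1\<close> for red and
  \<open>\<epsilon>(v) = -1\<close> for blue vertices. For an edge \<open>F\<close>, and for \<open>F = V\<close>, the sum of \<open>\<mu>\<close> over \<open>F\<close>
  is \<open>|F| + (r_F - b_F)/p\<close>, an integer by 2-solvability. Hence \<open>\<Sum>_v \<mu>(v) a_v\<close> is a lattice
  point of \<open>t P_H\<close> with \<open>t = \<Sum>_v \<mu>(v)\<close>, and its monomial lies in \<open>A[H]\<close>.
  The only lattice points of \<open>P_H\<close> are the vertices \<open>a_v\<close>, so every monomial of \<open>k[H]\<close> has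
  exponent \<open>\<Sum>_v n(v) a_v\<close> for some \<open>n : V \<rightarrow> \<nat>\<close>. For our monomial, \<open>d = n - \<mu>\<close> would then
  sum to zero over every edge. An edge \<open>{u, w}\<close> of the 1-skeleton forces \<open>d(u) = -d(w)\<close>, so
  by connectedness \<open>d = c \<epsilon>\<close>; summing over an edge \<open>E\<close> with \<open>r_E \<noteq> b_E\<close> gives \<open>c = 0\<close>.
  Thus \<open>n = \<mu>\<close>, although \<open>\<mu>\<close> never takes integer values.
\<close>

lemma lookup_expo: "Poly_Mapping.lookup (expo a t) = (\<lambda>j. case j of None \<Rightarrow> t | Some i \<Rightarrow> a i)"
  unfolding expo_def by (rule lookup_Abs_poly_mapping) simp

lemma expo_eq_iff: "expo a t = expo b s \<longleftrightarrow> a = b \<and> t = s"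
proof
  assume "expo a t = expo b s"
  then have "Poly_Mapping.lookup (expo a t) j = Poly_Mapping.lookup (expo b s) j" for j
    by simp
  from this[of None] this[of "Some _"] show "a = b \<and> t = s"
    by (auto simp: lookup_expo)
qed simp

lemma expo_add: "expo a t + expo b s = expo (\<lambda>i. a i + b i) (t + s)"
  by (rule poly_mapping_eqI) (auto simp: lookup_add lookup_expo split: option.splits)

lemma expo_zero: "expo (\<lambda>_. 0) 0 = 0"
  by (rule poly_mapping_eqI) (auto simp: lookup_expo split: option.splits)

lemma lattice_point_in_convex_hull_01:
  fixes S :: "(real^'x::finite) set"
  assumes "finite S" and S01: "\<And>y i. y \<in> S \<Longrightarrow> y $ i = 0 \<or> y $ i = 1"
    and "rvec a \<in> convex hull S"
  shows "rvec a \<in> S"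
proof -
  obtain u where u_nonneg: "\<forall>y\<in>S. 0 \<le> u y" and u_sum: "sum u S = 1"
    and u_comb: "(\<Sum>y\<in>S. u y *\<^sub>R y) = rvec a"
    using assms(3) unfolding convex_hull_finite[OF \<open>finite S\<close>] by blast
  have "\<exists>x\<in>S. u x \<noteq> 0" using u_sum by (metis sum.neutral zero_neq_one)
  then obtain x where "x \<in> S" and "u x > 0" using u_nonneg by force
  have "x $ i = real (a i)" for i
  proof -
    have terms_nonneg: "0 \<le> u y * y $ i" "0 \<le> u y * (1 - y $ i)" if "y \<in> S" for y
      using S01[OF that, of i] u_nonneg that by auto
    have coord: "real (a i) = (\<Sum>y\<in>S. u y * y $ i)"
      using arg_cong[OF u_comb, of "\<lambda>z. z $ i"] by (simp add: sum_component rvec_def)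
    have co_coord: "1 - real (a i) = (\<Sum>y\<in>S. u y * (1 - y $ i))"
      using coord u_sum by (simp add: algebra_simps sum_subtractf)
    show ?thesis
    proof (cases "a i = 0")
      case True
      then have "\<forall>y\<in>S. u y * y $ i = 0"
        using coord sum_nonneg_eq_0_iff[OF \<open>finite S\<close>, of "\<lambda>y. u y * y $ i"] terms_nonneg(1) by simp
      then have "u x * x $ i = 0" using \<open>x \<in> S\<close> by blast
      with \<open>u x > 0\<close> True show ?thesis by simp
    next
      case False
      have "(\<Sum>y\<in>S. u y * (1 - y $ i)) \<ge> 0" by (rule sum_nonneg) (rule terms_nonneg(2))
      with False co_coord have "a i = 1" "(\<Sum>y\<in>S. u y * (1 - y $ i)) = 0"
        by linarith+
      then have "\<forall>y\<in>S. u y * (1 - y $ i) = 0"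
        using sum_nonneg_eq_0_iff[OF \<open>finite S\<close>, of "\<lambda>y. u y * (1 - y $ i)"] terms_nonneg(2) by simp
      then have "u x * (1 - x $ i) = 0" using \<open>x \<in> S\<close> by blast
      with \<open>u x > 0\<close> \<open>a i = 1\<close> show ?thesis by simp
    qed
  qed
  then have "x = rvec a" by (simp add: vec_eq_iff rvec_def)
  with \<open>x \<in> S\<close> show ?thesis by simp
qed

lemma lattice_point_polytope_H:
  assumes "finite V" and "rvec a \<in> polytope_H V f"
  shows "\<exists>v\<in>V. rvec a = avec f v"
proof -
  have "rvec a \<in> avec f ` V"
  proof (rule lattice_point_in_convex_hull_01)
    show "finite (avec f ` V)" using assms(1) by simp
    show "y $ i = 0 \<or> y $ i = 1" if "y \<in> avec f ` V" for y i
      using that by (auto simp: avec_def)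
    show "rvec a \<in> convex hull (avec f ` V)"
      using assms(2) by (simp add: polytope_H_def)
  qed
  then show ?thesis by auto
qed

lemma keys_kalg_subset:
  assumes "0 \<in> M" and add_closed: "\<And>a b. a \<in> M \<Longrightarrow> b \<in> M \<Longrightarrow> a + b \<in> M"
    and gens: "\<And>g. g \<in> G \<Longrightarrow> Poly_Mapping.keys g \<subseteq> M"
    and "q \<in> kalg G"
  shows "Poly_Mapping.keys q \<subseteq> M"
  using \<open>q \<in> kalg G\<close>
proof induction
  case (kalg_add p q)
  then show ?case using keys_add[of p q] by blast
next
  case (kalg_mult p q)
  then show ?case using keys_mult[of p q] add_closed by blast
next
  case (kalg_smult p c)
  then show ?case using keys_mult[of "Poly_Mapping.single 0 c" p] by (fastforce split: if_splits)
qed (use assms in auto)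

definition vertex_exponents :: "'v set \<Rightarrow> ('x::finite \<Rightarrow> 'v set) \<Rightarrow> ('x option \<Rightarrow>\<^sub>0 nat) set" where
  "vertex_exponents V f = {expo (\<lambda>i. \<Sum>v\<in>f i. n v) (\<Sum>v\<in>V. n v) | n. True}"

lemma zero_in_vertex_exponents: "0 \<in> vertex_exponents V f"
  unfolding vertex_exponents_def by (auto simp: expo_zero intro!: exI[of _ "\<lambda>_. 0"])

lemma add_in_vertex_exponents:
  assumes "a \<in> vertex_exponents V f" and "b \<in> vertex_exponents V f"
  shows "a + b \<in> vertex_exponents V f"
proof -
  obtain n m where "a = expo (\<lambda>i. \<Sum>v\<in>f i. n v) (\<Sum>v\<in>V. n v)"
    and "b = expo (\<lambda>i. \<Sum>v\<in>f i. m v) (\<Sum>v\<in>V. m v)"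
    using assms unfolding vertex_exponents_def by blast
  then have "a + b = expo (\<lambda>i. \<Sum>v\<in>f i. n v + m v) (\<Sum>v\<in>V. n v + m v)"
    by (simp add: expo_add sum.distrib)
  then show ?thesis unfolding vertex_exponents_def by blast
qed

lemma keys_polytopal_H:
  assumes "labeled_hypergraph V f" and "q \<in> polytopal_H V f"
  shows "Poly_Mapping.keys (q :: ('x::finite, 'k::field) spoly) \<subseteq> vertex_exponents V f"
proof (rule keys_kalg_subset[OF zero_in_vertex_exponents add_in_vertex_exponents])
  show "q \<in> kalg {monomial a 1 | a. rvec a \<in> polytope_H V f}"
    using assms(2) unfolding polytopal_H_def polytopal_ring_def .
next
  fix g :: "('x, 'k) spoly"
  assume "g \<in> {monomial a 1 | a. rvec a \<in> polytope_H V f}"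
  then obtain a where g: "g = monomial a 1" and "rvec a \<in> polytope_H V f" by blast
  have "finite V" and sub: "f i \<subseteq> V" for i
    using assms(1) by (auto simp: labeled_hypergraph_def)
  then obtain v where "v \<in> V" and "rvec a = avec f v"
    using lattice_point_polytope_H \<open>rvec a \<in> polytope_H V f\<close> by blast
  then have "a = (\<lambda>i. if v \<in> f i then 1 else 0)"
    by (intro ext) (auto simp: vec_eq_iff rvec_def avec_def split: if_splits)
  then have "expo a 1 = expo (\<lambda>i. \<Sum>w\<in>f i. if w = v then 1 else 0) (\<Sum>w\<in>V. if w = v then 1 else 0)"
    using \<open>finite V\<close> \<open>v \<in> V\<close> finite_subset[OF sub] by (simp add: sum.delta)
  then show "Poly_Mapping.keys g \<subseteq> vertex_exponents V f"
    unfolding g monomial_def vertex_exponents_def by auto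
qed

lemma monomial_in_polytopal_H_vertex_sum:
  assumes "labeled_hypergraph V f" and "(monomial z t :: ('x::finite, 'k::field) spoly) \<in> polytopal_H V f"
  obtains n where "\<And>i. z i = (\<Sum>v\<in>f i. n v)"
proof -
  have "expo z t \<in> vertex_exponents V f"
    using keys_polytopal_H[OF assms] by (simp add: monomial_def)
  then show ?thesis using that unfolding vertex_exponents_def by (auto simp: expo_eq_iff)
qed

lemma monomial_in_ehrhart_H:
  assumes "labeled_hypergraph V f" and mu_nonneg: "\<And>v. v \<in> V \<Longrightarrow> 0 \<le> mu v"
    and t: "real t = (\<Sum>v\<in>V. mu v)" "t > 0"
    and z: "\<And>i. real (z i) = (\<Sum>v\<in>f i. mu v)"
  shows "(monomial z t :: ('x::finite, 'k::field) spoly) \<in> ehrhart_H V f"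
proof -
  have "finite V" and sub: "f i \<subseteq> V" for i
    using assms(1) by (auto simp: labeled_hypergraph_def)
  define q where "q = (\<Sum>v\<in>V. (mu v / real t) *\<^sub>R avec f v)"
  have "q \<in> polytope_H V f"
    unfolding q_def polytope_H_def
  proof (rule convex_sum[OF \<open>finite V\<close> convex_convex_hull])
    show "(\<Sum>v\<in>V. mu v / real t) = 1"
      using t by (simp add: sum_divide_distrib[symmetric])
  qed (use mu_nonneg in \<open>auto simp: hull_inc\<close>)
  have "real t *\<^sub>R q = (\<Sum>v\<in>V. mu v *\<^sub>R avec f v)"
    unfolding q_def scaleR_sum_right using t by simp
  also have "\<dots> = rvec z"
  proof (subst vec_eq_iff, intro allI)
    fix i
    have "(\<Sum>v\<in>V. mu v *\<^sub>R avec f v) $ i = (\<Sum>v\<in>V. if v \<in> f i then mu v else 0)"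
      by (auto simp: sum_component avec_def intro: sum.cong)
    also have "\<dots> = (\<Sum>v\<in>f i. mu v)"
      using sub[of i] by (simp add: sum.inter_restrict[OF \<open>finite V\<close>, symmetric] Int_absorb1)
    finally show "(\<Sum>v\<in>V. mu v *\<^sub>R avec f v) $ i = rvec z $ i"
      by (simp add: z rvec_def)
  qed
  finally have "rvec z \<in> (\<lambda>p. real t *\<^sub>R p) ` polytope_H V f"
    using \<open>q \<in> polytope_H V f\<close> by (metis image_eqI)
  then show ?thesis
    unfolding ehrhart_H_def ehrhart_ring_def by (blast intro: kspan_gen)
qed

definition colour_sign :: "('v \<Rightarrow> bool) \<Rightarrow> 'v \<Rightarrow> real" where
  "colour_sign red v = (if red v then 1 else -1)"

lemma sum_colour_sign:
  assumes "finite E"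
  shows "(\<Sum>v\<in>E. colour_sign red v) = real_of_int (num_red red E - num_blue red E)"
  using assms by (simp add: colour_sign_def sum.If_cases Int_def num_red_def num_blue_def)

lemma edge_balanced_weights_vanish:
  fixes d :: "'v \<Rightarrow> real"
  assumes "skel_connected V f" and proper: "\<And>u w. skel_adj f u w \<Longrightarrow> red u \<noteq> red w"
    and balanced: "\<And>i. (\<Sum>v\<in>f i. d v) = 0"
    and "E \<in> range f" "E \<subseteq> V" "finite E" and unbalanced: "num_red red E \<noteq> num_blue red E"
    and "v \<in> V"
  shows "d v = 0"
proof -
  define g where "g v = colour_sign red v * d v" for v
  have g_step: "g u = g w" if "skel_adj f u w" for u w
  proof -
    have "{u, w} \<in> range f" "u \<noteq> w"
      using that by (auto simp: skel_adj_def hedges_def)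
    then obtain i where "f i = {u, w}" by (metis imageE)
    then have "d u = - d w" using balanced[of i] \<open>u \<noteq> w\<close> by simp
    moreover have "colour_sign red u = - colour_sign red w"
      using proper[OF that] by (simp add: colour_sign_def)
    ultimately show ?thesis unfolding g_def by simp
  qed
  have g_const: "g u = g w" if "u \<in> V" "w \<in> V" for u w
  proof -
    have "(u, w) \<in> {(a, b). skel_adj f a b}\<^sup>*"
      using \<open>skel_connected V f\<close> that unfolding skel_connected_def by blast
    then show ?thesis by induction (auto dest: g_step)
  qed
  have "E \<noteq> {}" using unbalanced by (auto simp: num_red_def num_blue_def)
  then obtain v0 where "v0 \<in> E" by blast
  have d_on_E: "d w = g v0 * colour_sign red w" if "w \<in> E" for w
  proof -
    have "g w = g v0" using g_const that \<open>v0 \<in> E\<close> \<open>E \<subseteq> V\<close> by blast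
    then show ?thesis by (cases "red w"; cases "red v0") (auto simp: g_def colour_sign_def)
  qed
  have "(\<Sum>w\<in>E. d w) = g v0 * (\<Sum>w\<in>E. colour_sign red w)"
    by (simp add: d_on_E sum_distrib_left)
  moreover have "(\<Sum>v\<in>E. d v) = 0" using \<open>E \<in> range f\<close> balanced by auto
  ultimately have "g v0 = 0"
    using unbalanced by (simp add: sum_colour_sign[OF \<open>finite E\<close>])
  with g_const[OF \<open>v \<in> V\<close>] \<open>v0 \<in> E\<close> \<open>E \<subseteq> V\<close> have "g v = 0" by auto
  then show ?thesis by (simp add: g_def colour_sign_def split: if_splits)
qed

lemma sum_perturbed_weights_nat:
  assumes "finite F" and "p > 0" and dvd: "(num_red red F - num_blue red F) mod int p = 0"
  shows "\<exists>m::nat. real m = (\<Sum>v\<in>F. 1 + colour_sign red v / real p)"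
proof -
  obtain k where k: "num_red red F - num_blue red F = int p * k"
    using dvd by (metis mod_0_imp_dvd dvdE)
  have sum_eq: "(\<Sum>v\<in>F. 1 + colour_sign red v / real p) = of_int (int (card F) + k)"
    using \<open>p > 0\<close> by (simp add: sum.distrib sum_divide_distrib[symmetric] sum_colour_sign[OF \<open>finite F\<close>] k)
  have "(\<Sum>v\<in>F. 1 + colour_sign red v / real p) \<ge> 0"
    using \<open>p > 0\<close> by (intro sum_nonneg) (auto simp: colour_sign_def field_simps)
  then have "int (card F) + k \<ge> 0" unfolding sum_eq by simp
  then show ?thesis by (intro exI[of _ "nat (int (card F) + k)"]) (simp add: sum_eq)
qed

lemma perturbed_weight_not_nat:
  assumes "p \<ge> 2"
  shows "real n \<noteq> 1 + colour_sign red v / real p"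
proof
  assume n: "real n = 1 + colour_sign red v / real p"
  have "0 < 1 / real p" "1 / real p < 1" using assms by simp_all
  moreover have "real n = 1 + 1 / real p \<or> real n = 1 - 1 / real p"
    using n by (simp add: colour_sign_def)
  ultimately have "0 < real n" "real n < 2" "real n \<noteq> 1" by linarith+
  then have "0 < n" "n < 2" "n \<noteq> 1" by simp_all
  then show False by linarith
qed

lemma perturbed_monomial_in_ehrhart_H:
  assumes "labeled_hypergraph V f" and "V \<noteq> {}" and "p \<ge> 2"
    and "two_solving_coloring V f p red"
  obtains z t where "(monomial z t :: ('x::finite, 'k::field) spoly) \<in> ehrhart_H V f"
    and "\<And>i. real (z i) = (\<Sum>v\<in>f i. 1 + colour_sign red v / real p)"
proof -
  have "finite V" and sub: "f i \<subseteq> V" for i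
    using assms(1) by (auto simp: labeled_hypergraph_def)
  have "p > 0" using \<open>p \<ge> 2\<close> by simp
  have balanced_mod_p: "\<And>F. F \<in> insert V (hedges f) \<Longrightarrow> (num_red red F - num_blue red F) mod int p = 0"
    using assms(4) unfolding two_solving_coloring_def by blast
  define mu where "mu v = 1 + colour_sign red v / real p" for v
  have mu_pos: "mu v > 0" for v
    using \<open>p \<ge> 2\<close> by (auto simp: mu_def colour_sign_def field_simps)
  have "\<exists>m::nat. real m = (\<Sum>v\<in>f i. mu v)" for i
  proof (cases "f i = {}")
    case False
    then have "f i \<in> insert V (hedges f)" by (simp add: hedges_def)
    from sum_perturbed_weights_nat[OF finite_subset[OF sub \<open>finite V\<close>] \<open>p > 0\<close> balanced_mod_p[OF this]]
    show ?thesis unfolding mu_def .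
  qed simp
  then obtain z where z: "\<And>i. real (z i) = (\<Sum>v\<in>f i. mu v)" by metis
  obtain t where t: "real t = (\<Sum>v\<in>V. mu v)"
    using sum_perturbed_weights_nat[OF \<open>finite V\<close> \<open>p > 0\<close> balanced_mod_p[OF insertI1]]
    unfolding mu_def by blast
  have "(\<Sum>v\<in>V. mu v) > 0" by (rule sum_pos[OF \<open>finite V\<close> \<open>V \<noteq> {}\<close> mu_pos])
  then have "t > 0" using t by simp
  have "(monomial z t :: ('x, 'k) spoly) \<in> ehrhart_H V f"
    by (rule monomial_in_ehrhart_H[OF assms(1) less_imp_le[OF mu_pos] t \<open>t > 0\<close> z])
  with z show ?thesis using that unfolding mu_def by blast
qed

theorem theorem4p6:
  fixes V :: "'v set" and f :: "'x::finite \<Rightarrow> 'v set" and p :: nat and red :: "'v \<Rightarrow> bool"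
  assumes "labeled_hypergraph V f"
    and "separated V f"
    and "skel_connected V f"
    and "prime p"
    and "two_solving_coloring V f p red"
    and "\<exists>E. simple_edge f E \<and> num_red red E \<noteq> num_blue red E"
  shows "(ehrhart_H V f :: ('x,'k::field) spoly set) \<noteq> polytopal_H V f"
proof
  assume equal: "(ehrhart_H V f :: ('x,'k) spoly set) = polytopal_H V f"
  have "p \<ge> 2" using \<open>prime p\<close> prime_ge_2_nat by blast
  have proper: "\<And>u w. skel_adj f u w \<Longrightarrow> red u \<noteq> red w"
    using assms(5) unfolding two_solving_coloring_def by blast
  obtain E where "E \<in> range f" "E \<noteq> {}" and unbalanced: "num_red red E \<noteq> num_blue red E"
    using assms(6) unfolding simple_edge_def hedges_def by blast
  have "finite V" and "E \<subseteq> V"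
    using assms(1) \<open>E \<in> range f\<close> by (auto simp: labeled_hypergraph_def)
  then obtain v where "v \<in> V" using \<open>E \<noteq> {}\<close> by blast
  obtain z t where "(monomial z t :: ('x,'k) spoly) \<in> ehrhart_H V f"
    and z: "\<And>i. real (z i) = (\<Sum>v\<in>f i. 1 + colour_sign red v / real p)"
    using perturbed_monomial_in_ehrhart_H[OF assms(1) _ \<open>p \<ge> 2\<close> assms(5)] \<open>v \<in> V\<close> by blast
  then obtain n where n: "\<And>i. z i = (\<Sum>v\<in>f i. n v)"
    using monomial_in_polytopal_H_vertex_sum[OF assms(1)] equal by metis
  have "(\<Sum>w\<in>f i. real (n w) - (1 + colour_sign red w / real p)) = 0" for i
    by (simp add: sum_subtractf z[symmetric] n)
  from edge_balanced_weights_vanish[OF assms(3) proper this \<open>E \<in> range f\<close> \<open>E \<subseteq> V\<close>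
      finite_subset[OF \<open>E \<subseteq> V\<close> \<open>finite V\<close>] unbalanced \<open>v \<in> V\<close>]
  show False using perturbed_weight_not_nat[OF \<open>p \<ge> 2\<close>, of "n v" red v] by simp
qed

end
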